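(* Let $B$ be an $(n,n-1)$-blocker for a convex $n$-gon $C$ with vertices $0,\dots,n-1$ (indices mod $n$). If the ear-cover $(i-1,i+1)$ does not belong to $B$ and $\deg_B(i)=2$, then $B\setminus\{i\}$ is a minimum-sized blocker (a blocker with exactly $(n-1)-2=n-3$ edges) for the $(n-1)$-gon $C\setminus\{i\}$.
   Context: An edge $(i,j)$ is the segment between vertices $i,j$; boundary edges are $(i,i+1)$, diagonals are the other edges. Two edges cross if they share an interior point. A triangulation is a maximal set of pairwise non-crossing diagonals. A blocker is a set $B$ of diagonals having a diagonal in common with every triangulation; it is saturated if for every $e\in B$, $B\setminus\{e\}$ is not a blocker. An $(n,k)$-blocker is a saturated blocker of size $k$ for a convex $n$-gon. Every blocker of a convex $N$-gon has at least $N-2$ edges; those with exactly $N-2$ are minimum-sized. $(i-1,i+1)$ is the ear-cover covering $i$; $\deg_B(i)$ is the number of edges of $B$ incident to $i$. $C\setminus\{i\}$ is the convex polygon obtained by deleting vertex $i$ (so $(i-1,i+1)$ becomes a side), and $B\setminus\{i\}$ is obtained from $B$ by removing all edges incident to $i$ and the edge $(i-1,i+1)$. *)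

theory Defs
  imports Main
begin

text \<open>A convex polygon is represented combinatorially by a finite set V of natural
numbers (its vertices), listed in cyclic order by the natural order of nat.
The convex n-gon is {0..<n}; deleting vertex i gives {0..<n} - {i}.
An edge is an unordered pair of distinct vertices.\<close>

definition boundary_edge :: "nat set \<Rightarrow> nat set \<Rightarrow> bool" where
  "boundary_edge V e \<longleftrightarrow> (\<exists>a b. e = {a, b} \<and> a < b \<and> a \<in> V \<and> b \<in> V \<and>
      ((\<not> (\<exists>x\<in>V. a < x \<and> x < b)) \<or> (\<not> (\<exists>x\<in>V. x < a \<or> b < x))))"

definition diagonal :: "nat set \<Rightarrow> nat set \<Rightarrow> bool" where
  "diagonal V e \<longleftrightarrow> (\<exists>a b. e = {a, b} \<and> a \<noteq> b \<and> a \<in> V \<and> b \<in> V) \<and> \<not> boundary_edge V e"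

text \<open>For vertices in convex position, two edges share an interior point iff their
endpoints strictly interleave in the cyclic order.\<close>
definition crosses :: "nat set \<Rightarrow> nat set \<Rightarrow> bool" where
  "crosses e f \<longleftrightarrow> (\<exists>a b c d. ((e = {a, b} \<and> f = {c, d}) \<or> (e = {c, d} \<and> f = {a, b}))
      \<and> a < c \<and> c < b \<and> b < d)"

definition triangulation :: "nat set \<Rightarrow> nat set set \<Rightarrow> bool" where
  "triangulation V T \<longleftrightarrow>
     (\<forall>e\<in>T. diagonal V e) \<and> (\<forall>e\<in>T. \<forall>f\<in>T. \<not> crosses e f) \<and>
     (\<forall>d. diagonal V d \<and> d \<notin> T \<longrightarrow> (\<exists>e\<in>T. crosses d e))"

definition blocker :: "nat set \<Rightarrow> nat set set \<Rightarrow> bool" where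
  "blocker V B \<longleftrightarrow> (\<forall>e\<in>B. diagonal V e) \<and> (\<forall>T. triangulation V T \<longrightarrow> B \<inter> T \<noteq> {})"

definition saturated_blocker :: "nat set \<Rightarrow> nat set set \<Rightarrow> bool" where
  "saturated_blocker V B \<longleftrightarrow> blocker V B \<and> (\<forall>e\<in>B. \<not> blocker V (B - {e}))"

definition nk_blocker :: "nat \<Rightarrow> nat \<Rightarrow> nat set set \<Rightarrow> bool" where
  "nk_blocker n k B \<longleftrightarrow> saturated_blocker {0..<n} B \<and> card B = k"

definition minimum_sized_blocker :: "nat set \<Rightarrow> nat set set \<Rightarrow> bool" where
  "minimum_sized_blocker V B \<longleftrightarrow> blocker V B \<and> card B = card V - 2"

definition deg :: "nat set set \<Rightarrow> nat \<Rightarrow> nat" where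
  "deg B i = card {e \<in> B. i \<in> e}"

definition ear_cover :: "nat \<Rightarrow> nat \<Rightarrow> nat set" where
  "ear_cover n i = {(i + n - 1) mod n, (i + 1) mod n}"

definition delete_vertex_blocker :: "nat \<Rightarrow> nat set set \<Rightarrow> nat \<Rightarrow> nat set set" where
  "delete_vertex_blocker n B i = {e \<in> B. i \<notin> e} - {ear_cover n i}"

end

theory Submission
  imports Defs
begin

text \<open>Let T be a triangulation of C \ {i}. Adding the ear-cover (i-1,i+1) gives a triangulation
of C: the ear-cover is a side of C \ {i}, so it crosses nothing in T; every diagonal of C at i
crosses it; and every other diagonal of C is a diagonal of C \ {i}. As B misses the ear-cover, it
meets this triangulation in a diagonal of T, which avoids i and so lies in B \ {i}. Finally
B \ {i} is B minus its two edges at i, hence has (n-1)-2 edges.\<close>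

lemma boundary_edgeE:
  assumes "boundary_edge V e"
  obtains a b where "e = {a, b}" "a < b" "a \<in> V" "b \<in> V"
  using assms unfolding boundary_edge_def by blast

lemma boundary_edge_doubleton_iff:
  assumes "a < b" "a \<in> V" "b \<in> V"
  shows "boundary_edge V {a, b} \<longleftrightarrow>
    (\<forall>x\<in>V. \<not> (a < x \<and> x < b)) \<or> (\<forall>x\<in>V. a \<le> x \<and> x \<le> b)"
  using assms unfolding boundary_edge_def by (auto simp: doubleton_eq_iff not_less)

lemma diagonalE:
  assumes "diagonal V e"
  obtains a b where "e = {a, b}" "a < b" "a \<in> V" "b \<in> V" "\<not> boundary_edge V {a, b}"
  using assms unfolding diagonal_def by (metis insert_commute linorder_neq_iff)

lemma diagonal_doubleton_iff:
  assumes "a < b" "a \<in> V" "b \<in> V"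
  shows "diagonal V {a, b} \<longleftrightarrow> \<not> boundary_edge V {a, b}"
  using assms unfolding diagonal_def by auto

lemma boundary_edge_atLeastLessThan_iff:
  assumes "a < b" "b < n"
  shows "boundary_edge {0..<n} {a, b} \<longleftrightarrow> b = Suc a \<or> (a = 0 \<and> b = n - 1)"
  using assms by (auto simp: boundary_edge_doubleton_iff dest: bspec[of _ _ "n - 1"])

lemma diagonal_atLeastLessThan_iff:
  assumes "a < b" "b < n"
  shows "diagonal {0..<n} {a, b} \<longleftrightarrow> b \<noteq> Suc a \<and> \<not> (a = 0 \<and> b = n - 1)"
  using assms by (simp add: diagonal_doubleton_iff boundary_edge_atLeastLessThan_iff)

lemma diagonal_atLeastLessThanE:
  assumes "diagonal {0..<n} e"
  obtains a b where "e = {a, b}" "a < b" "b < n" "b \<noteq> Suc a" "\<not> (a = 0 \<and> b = n - 1)"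
proof -
  obtain a b where "e = {a, b}" "a < b" "b < n" "\<not> boundary_edge {0..<n} {a, b}"
    using assms by (auto elim: diagonalE)
  then show thesis
    using that by (simp add: boundary_edge_atLeastLessThan_iff)
qed

lemma ear_cover_0: "2 \<le> n \<Longrightarrow> ear_cover n 0 = {1, n - 1}"
  by (auto simp: ear_cover_def)

lemma ear_cover_last: "2 \<le> n \<Longrightarrow> ear_cover n (n - 1) = {0, n - 2}"
  by (auto simp: ear_cover_def le_mod_geq)

lemma ear_cover_middle: "0 < i \<Longrightarrow> i < n - 1 \<Longrightarrow> ear_cover n i = {i - 1, i + 1}"
  by (auto simp: ear_cover_def le_mod_geq)

lemma ear_cover_cases:
  assumes "i < n" "2 \<le> n"
  obtains "i = 0" "ear_cover n i = {1, n - 1}"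
  | "i = n - 1" "0 < i" "ear_cover n i = {0, n - 2}"
  | "0 < i" "i < n - 1" "ear_cover n i = {i - 1, i + 1}"
proof -
  consider "i = 0" | "i = n - 1" "0 < i" | "0 < i" "i < n - 1"
    using assms by linarith
  then show thesis
  proof cases
    case 1
    with that(1) assms show thesis by (simp add: ear_cover_0)
  next
    case 2
    moreover have "ear_cover n i = {0, n - 2}"
      using ear_cover_last[of n] 2 assms by simp
    ultimately show thesis by (rule that(2))
  next
    case 3
    with that(3) show thesis by (simp add: ear_cover_middle)
  qed
qed

lemma boundary_edge_restrict:
  assumes "boundary_edge V e" "e \<subseteq> W" "W \<subseteq> V"
  shows "boundary_edge W e"
  using assms unfolding boundary_edge_def by blast

lemma diagonal_mono:
  assumes "diagonal W e" "W \<subseteq> V"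
  shows "diagonal V e"
  using assms boundary_edge_restrict unfolding diagonal_def by blast

lemma boundary_edge_subset: "boundary_edge V e \<Longrightarrow> e \<subseteq> V"
  by (auto elim: boundary_edgeE)

lemma diagonal_subset: "diagonal V e \<Longrightarrow> e \<subseteq> V"
  by (auto elim: diagonalE)

lemma crossesI: "a < c \<Longrightarrow> c < b \<Longrightarrow> b < d \<Longrightarrow> crosses {a, b} {c, d}"
  unfolding crosses_def by blast

lemma crosses_sym: "crosses e f \<Longrightarrow> crosses f e"
  unfolding crosses_def by blast

lemma not_crosses_self: "\<not> crosses e e"
  unfolding crosses_def by (auto simp: doubleton_eq_iff)

lemma boundary_edge_not_crosses:
  assumes "boundary_edge V e" "f \<subseteq> V"
  shows "\<not> crosses e f"
proof
  assume "crosses e f"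
  then obtain a b c d where abcd: "a < c" "c < b" "b < d"
    and "(e = {a, b} \<and> f = {c, d}) \<or> (e = {c, d} \<and> f = {a, b})"
    unfolding crosses_def by blast
  then consider "e = {a, b}" "c \<in> V" "d \<in> V" | "e = {c, d}" "a \<in> V" "b \<in> V"
    using \<open>f \<subseteq> V\<close> by blast
  then show False
  proof cases
    case 1
    with abcd assms(1) boundary_edge_subset[OF assms(1)] show False
      by (auto simp: boundary_edge_doubleton_iff)
  next
    case 2
    with abcd assms(1) boundary_edge_subset[OF assms(1)] show False
      by (auto simp: boundary_edge_doubleton_iff)
  qed
qed

lemma ear_cover_boundary_edge:
  assumes "i < n" "3 \<le> n"
  shows "boundary_edge ({0..<n} - {i}) (ear_cover n i)"
  by (rule ear_cover_cases[of i n]) (use assms in \<open>auto intro!: iffD2[OF boundary_edge_doubleton_iff]\<close>)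

lemma ear_cover_diagonal:
  assumes "i < n" "4 \<le> n"
  shows "diagonal {0..<n} (ear_cover n i)"
  by (rule ear_cover_cases[of i n]) (use assms in \<open>auto simp: diagonal_atLeastLessThan_iff\<close>)

lemma boundary_edge_delete_vertex_eq_ear_cover:
  assumes "i < n" "boundary_edge ({0..<n} - {i}) e" "\<not> boundary_edge {0..<n} e"
  shows "e = ear_cover n i"
proof -
  let ?W = "{0..<n} - {i}"
  obtain a b where e: "e = {a, b}" "a < b" "a \<in> ?W" "b \<in> ?W"
    using assms(2) by (rule boundary_edgeE)
  have "b \<noteq> Suc a" "\<not> (a = 0 \<and> b = n - 1)"
    using assms(3) e by (auto simp: boundary_edge_atLeastLessThan_iff)
  from assms(2) e consider
    (inner) "\<forall>x\<in>?W. \<not> (a < x \<and> x < b)" | (outer) "\<forall>x\<in>?W. a \<le> x \<and> x \<le> b"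
    using boundary_edge_doubleton_iff[of a b ?W] by blast
  then show ?thesis
  proof cases
    case inner
    have "i = Suc a"
      using inner[rule_format, of "Suc a"] e \<open>b \<noteq> Suc a\<close> by auto
    moreover have "b = Suc i"
      using inner[rule_format, of "Suc i"] e calculation by auto
    ultimately have "i - 1 = a" "i + 1 = b" "0 < i" "i < n - 1"
      using e by auto
    then show ?thesis
      using ear_cover_middle[of i n] e(1) by simp
  next
    case outer
    show ?thesis
    proof (cases "a = 0")
      case True
      have "b < n - 1"
        using e True \<open>\<not> (a = 0 \<and> b = n - 1)\<close> by auto
      then have "i = n - 1"
        using outer[rule_format, of "n - 1"] by auto
      moreover have "n - 2 \<in> ?W"
        using \<open>b < n - 1\<close> calculation by auto
      then have "n - 2 \<le> b"
        using outer by blast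
      then have "b = n - 2"
        using \<open>b < n - 1\<close> by linarith
      ultimately show ?thesis
        using ear_cover_last[of n] e(1,2) True by (simp add: insert_commute)
    next
      case False
      have "i = 0"
        using outer[rule_format, of 0] e False by auto
      moreover have "a = 1"
        using outer[rule_format, of 1] e False calculation by auto
      moreover have "b = n - 1"
        using outer[rule_format, of "n - 1"] e calculation by auto
      ultimately show ?thesis
        using ear_cover_0[of n] e(1,2) by simp
    qed
  qed
qed

lemma diagonal_delete_vertex_iff:
  assumes "i < n" "3 \<le> n"
  shows "diagonal ({0..<n} - {i}) e \<longleftrightarrow> diagonal {0..<n} e \<and> i \<notin> e \<and> e \<noteq> ear_cover n i"
proof
  assume e: "diagonal ({0..<n} - {i}) e"
  have "e \<noteq> ear_cover n i"
    using e ear_cover_boundary_edge[OF assms] unfolding diagonal_def by blast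
  then show "diagonal {0..<n} e \<and> i \<notin> e \<and> e \<noteq> ear_cover n i"
    using diagonal_mono[OF e] diagonal_subset[OF e] by blast
next
  assume "diagonal {0..<n} e \<and> i \<notin> e \<and> e \<noteq> ear_cover n i"
  then have e: "diagonal {0..<n} e" and "i \<notin> e" and "e \<noteq> ear_cover n i"
    by blast+
  from e obtain a b where ab: "e = {a, b}" "a < b" "a \<in> {0..<n}" "b \<in> {0..<n}"
    and "\<not> boundary_edge {0..<n} {a, b}"
    by (rule diagonalE)
  then have "\<not> boundary_edge ({0..<n} - {i}) {a, b}"
    using boundary_edge_delete_vertex_eq_ear_cover[OF assms(1)] \<open>e \<noteq> ear_cover n i\<close> by blast
  moreover have "a \<in> {0..<n} - {i}" "b \<in> {0..<n} - {i}"
    using ab \<open>i \<notin> e\<close> by auto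
  ultimately show "diagonal ({0..<n} - {i}) e"
    using diagonal_doubleton_iff[of a b "{0..<n} - {i}"] ab(1,2) by simp
qed

lemma crosses_ear_cover:
  assumes "diagonal {0..<n} d" "i \<in> d"
  shows "crosses d (ear_cover n i)"
proof -
  obtain a b where d: "d = {a, b}" "a < b" "b < n" "b \<noteq> Suc a" "\<not> (a = 0 \<and> b = n - 1)"
    using assms(1) by (rule diagonal_atLeastLessThanE)
  have "i = a \<or> i = b"
    using assms(2) d(1) by blast
  have "i < n" "2 \<le> n"
    using d \<open>i = a \<or> i = b\<close> by auto
  then show ?thesis
  proof (cases rule: ear_cover_cases)
    case 1
    then have "a = 0"
      using d(2) \<open>i = a \<or> i = b\<close> by auto
    then have "crosses {a, b} {1, n - 1}"
      using d by (intro crossesI) auto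
    then show ?thesis
      using 1 d(1) by simp
  next
    case 2
    then have "b = n - 1"
      using d(2,3) \<open>i = a \<or> i = b\<close> by auto
    then have "crosses {a, b} {0, n - 2}"
      using d by (intro crosses_sym[OF crossesI]) auto
    then show ?thesis
      using 2 d(1) by simp
  next
    case 3
    from \<open>i = a \<or> i = b\<close> have "crosses {a, b} {i - 1, i + 1}"
    proof
      assume "i = a"
      then show ?thesis
        using 3 d by (intro crosses_sym[OF crossesI]) auto
    next
      assume "i = b"
      then show ?thesis
        using 3 d by (intro crossesI) auto
    qed
    then show ?thesis
      using 3 d(1) by simp
  qed
qed

lemma triangulation_insert_ear_cover:
  assumes "i < n" "4 \<le> n" "triangulation ({0..<n} - {i}) T"
  shows "triangulation {0..<n} (insert (ear_cover n i) T)"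
proof -
  let ?W = "{0..<n} - {i}" and ?E = "ear_cover n i"
  have "3 \<le> n"
    using assms(2) by simp
  from assms(3) have diag_T: "\<And>e. e \<in> T \<Longrightarrow> diagonal ?W e"
    and noncrossing: "\<And>e f. e \<in> T \<Longrightarrow> f \<in> T \<Longrightarrow> \<not> crosses e f"
    and maximal: "\<And>d. diagonal ?W d \<Longrightarrow> d \<notin> T \<Longrightarrow> \<exists>e\<in>T. crosses d e"
    unfolding triangulation_def by blast+
  have "diagonal {0..<n} e" if "e \<in> insert ?E T" for e
    using that diag_T diagonal_delete_vertex_iff[OF assms(1) \<open>3 \<le> n\<close>]
      ear_cover_diagonal[OF assms(1,2)] by blast
  moreover have "\<not> crosses e f" if "e \<in> insert ?E T" "f \<in> insert ?E T" for e f
  proof -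
    have "\<not> crosses ?E g" if "g \<in> T" for g
      using ear_cover_boundary_edge[OF assms(1) \<open>3 \<le> n\<close>] diagonal_subset[OF diag_T[OF that]]
      by (rule boundary_edge_not_crosses)
    then show ?thesis
      using that noncrossing crosses_sym not_crosses_self by blast
  qed
  moreover have "\<exists>f\<in>insert ?E T. crosses d f"
    if "diagonal {0..<n} d" "d \<notin> insert ?E T" for d
  proof (cases "i \<in> d")
    case True
    then show ?thesis
      using that crosses_ear_cover by blast
  next
    case False
    then have "diagonal ?W d"
      using that diagonal_delete_vertex_iff[OF assms(1) \<open>3 \<le> n\<close>] by simp
    then show ?thesis
      using that maximal by blast
  qed
  ultimately show ?thesis
    unfolding triangulation_def by (intro conjI ballI allI impI) auto
qed

lemma blocker_delete_vertex_blocker: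
  assumes "i < n" "4 \<le> n" "blocker {0..<n} B" "ear_cover n i \<notin> B"
  shows "blocker ({0..<n} - {i}) (delete_vertex_blocker n B i)"
  unfolding blocker_def
proof (intro conjI ballI allI impI)
  have "3 \<le> n"
    using assms(2) by simp
  show "diagonal ({0..<n} - {i}) e" if "e \<in> delete_vertex_blocker n B i" for e
  proof -
    from that have "e \<in> B" "i \<notin> e" "e \<noteq> ear_cover n i"
      unfolding delete_vertex_blocker_def by auto
    with assms(3) show ?thesis
      unfolding blocker_def diagonal_delete_vertex_iff[OF assms(1) \<open>3 \<le> n\<close>] by blast
  qed
  show "delete_vertex_blocker n B i \<inter> T \<noteq> {}" if T: "triangulation ({0..<n} - {i}) T" for T
  proof -
    obtain e where "e \<in> B" "e \<in> insert (ear_cover n i) T"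
      using assms(3) triangulation_insert_ear_cover[OF assms(1,2) T]
      unfolding blocker_def by blast
    then have "e \<in> T"
      using assms(4) by auto
    then have "i \<notin> e"
      using T diagonal_subset unfolding triangulation_def by blast
    with \<open>e \<in> B\<close> \<open>e \<in> T\<close> show ?thesis
      using assms(4) unfolding delete_vertex_blocker_def by blast
  qed
qed

lemma diagonal_le_4_cases:
  assumes "n \<le> 4" "diagonal {0..<n} e"
  shows "e = {0, 2} \<or> e = {1, 3}"
proof -
  obtain a b where "e = {a, b}" "a < b" "b < n" "b \<noteq> Suc a" "\<not> (a = 0 \<and> b = n - 1)"
    using assms(2) by (rule diagonal_atLeastLessThanE)
  moreover from calculation have "(a = 0 \<and> b = 2) \<or> (a = 1 \<and> b = 3)"
    using assms(1) by linarith
  ultimately show ?thesis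
    by blast
qed

lemma deg_le_1_if_le_4:
  assumes "n \<le> 4" "\<forall>e\<in>B. diagonal {0..<n} e"
  shows "deg B i \<le> 1"
proof -
  have "{e \<in> B. i \<in> e} \<subseteq> {e \<in> {{0, 2}, {1, 3}}. i \<in> e}"
    using assms diagonal_le_4_cases by blast
  then have "deg B i \<le> card {e \<in> {{0, 2}, {1, 3}}. i \<in> e}"
    unfolding deg_def by (rule card_mono[rotated]) simp
  also have "\<dots> \<le> 1"
    by (auto simp: card_le_Suc0_iff_eq)
  finally show ?thesis .
qed

lemma card_delete_vertex_blocker:
  assumes "finite B" "ear_cover n i \<notin> B"
  shows "card (delete_vertex_blocker n B i) = card B - deg B i"
proof -
  have "delete_vertex_blocker n B i = B - {e \<in> B. i \<in> e}"
    using assms(2) unfolding delete_vertex_blocker_def by blast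
  then show ?thesis
    using assms(1) unfolding deg_def by (simp add: card_Diff_subset)
qed

theorem mainTheorem12:
  fixes n i :: nat and B :: "nat set set"
  assumes "nk_blocker n (n - 1) B"
    and "i < n"
    and "ear_cover n i \<notin> B"
    and "deg B i = 2"
  shows "minimum_sized_blocker ({0..<n} - {i}) (delete_vertex_blocker n B i)"
proof -
  have blocker: "blocker {0..<n} B" and card_B: "card B = n - 1"
    using assms(1) unfolding nk_blocker_def saturated_blocker_def by blast+
  have "4 \<le> n"
  proof (rule ccontr)
    assume "\<not> 4 \<le> n"
    then have "deg B i \<le> 1"
      using blocker deg_le_1_if_le_4[of n B i] unfolding blocker_def by simp
    with assms(4) show False
      by simp
  qed
  have "finite B"
    using card_B \<open>4 \<le> n\<close> card.infinite by fastforce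
  then have "card (delete_vertex_blocker n B i) = card ({0..<n} - {i}) - 2"
    using card_delete_vertex_blocker assms(2-4) card_B by simp
  with blocker_delete_vertex_blocker[OF assms(2) \<open>4 \<le> n\<close> blocker assms(3)] show ?thesis
    unfolding minimum_sized_blocker_def by blast
qed

end
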